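(* Let $b,c\in\mathbb{N}$, $n,m\ge 1$, and let $\hat Y_{cn,bm}=Y_{cn,bm}/c$, where $Y_{cn,bm}$ is the number of remaining white balls in the generalized OK Corral urn described in the context. Then for every integer $s\ge 1$, \[ \mathbb{E}\big(\hat Y_{cn,bm}^{s}\big)=\frac{1}{(n+m)!}\frac{c^{m}}{b^{m}}\sum_{\ell=0}^{n}(-1)^{n-\ell}\frac{\binom{n+m}{n-\ell}\binom{m+\ell}{\ell}}{\binom{m+\frac{c\ell}{b}}{m}}\,\ell^{m+n-1}\big(f_{s+1}(\ell)Q(\ell)+g_{s+1}(\ell)\big). \] Moreover, for each $s\in\mathbb{N}$ there exists a monic polynomial $M_s(y)=\sum_{i=1}^{2s}m_{i,s}y^i$ of degree $2s$ whose coefficients satisfy the polynomial identities (in the indeterminate $X$) \[ \sum_{i=1}^{2s}m_{i,s}f_{i+1}(X)=0,\qquad \sum_{i=1}^{2s}m_{i,s}g_{i+1}(X)=s!\,2^s X^{s+1}, \] and for such $M_s$, \[ \mathbb{E}\big(M_s(\hat Y_{cn,bm})\big)=\frac{s!\,2^s}{(n+m)!}\frac{c^{m}}{b^{m}}\sum_{\ell=0}^{n}(-1)^{n-\ell}\frac{\binom{n+m}{n-\ell}\binom{m+\ell}{\ell}}{\binom{m+\frac{c\ell}{b}}{m}}\,\ell^{m+n+s}=\frac{s!\,2^s}{n!\,m!}\frac{c^{m}}{b^{m}}\sum_{\ell=0}^{n}(-1)^{n-\ell}\frac{\binom{n}{\ell}}{\binom{m+\frac{c\ell}{b}}{m}}\,\ell^{m+n+s}.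 \]
   Context: The urn: started with $cn$ white and $bm$ black balls; at each step a ball is drawn uniformly at random among all balls present and returned; if it is white, $b$ black balls are removed; if it is black, $c$ white balls are removed. The process stops as soon as no white or no black balls remain; $Y_{cn,bm}$ is the number of white balls then. For real $x$ and integer $k\ge 0$, $\binom{x}{k}=x(x-1)\cdots(x-k+1)/k!$. Define \[ F(z,u)=e^{u(e^{-z}+z-1)},\qquad G(z,u)=e^{u(e^{-z}+z-1)}\int_0^z u\,e^{-t}e^{-u(e^{-t}+t-1)}\,dt, \] and the polynomials $f_n(u)=n![z^n]F(z,u)$, $g_n(u)=n![z^n]G(z,u)$ (coefficient extraction in $z$). $Q$ is Ramanujan's $Q$-function $Q(n)=\sum_{i=0}^{n}\frac{n(n-1)\cdots(n-i+1)}{n^i}$ for $n\ge1$ (the term $\ell=0$ in the sums vanishes because of the factor $\ell^{m+n-1}$ or $\ell^{m+n+s}$). *)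

theory Defs
  imports Complex_Main "HOL-Computational_Algebra.Formal_Power_Series"
begin

text \<open>State: w white balls, k black balls.
  A white draw (probability w/(w+k)) removes b black balls, a black draw
  (probability k/(w+k)) removes c white balls; the process stops as soon as
  w = 0 or k = 0.  urn_exp b c h w k is the expectation of h(Y) where Y is
  the final number of white balls, started from (w,k).  (For b = 0 or c = 0
  the process need not terminate; the value is then set to 0, these cases are
  excluded by the hypotheses of the theorem.)\<close>

function urn_exp :: "nat \<Rightarrow> nat \<Rightarrow> (nat \<Rightarrow> real) \<Rightarrow> nat \<Rightarrow> nat \<Rightarrow> real" where
  "urn_exp b c h w k =
     (if b = 0 \<or> c = 0 then 0
      else if w = 0 \<or> k = 0 then h w
      else (real w / real (w + k)) * urn_exp b c h w (k - b)
         + (real k / real (w + k)) * urn_exp b c h (w - c) k)"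
  by pat_completeness auto
termination
  by (relation "measure (\<lambda>(b,c,h,w,k). w + k)") auto

definition urnA :: "real fps" where
  "urnA = fps_exp (-1) + fps_X - 1"

definition urnF :: "real \<Rightarrow> real fps" where
  "urnF u = fps_compose (fps_exp u) urnA"

definition urnG :: "real \<Rightarrow> real fps" where
  "urnG u = urnF u * fps_integral (fps_const u * fps_exp (-1) * fps_compose (fps_exp (-u)) urnA) 0"

definition f_poly :: "nat \<Rightarrow> real \<Rightarrow> real" where
  "f_poly n u = fact n * fps_nth (urnF u) n"

definition g_poly :: "nat \<Rightarrow> real \<Rightarrow> real" where
  "g_poly n u = fact n * fps_nth (urnG u) n"

definition ramQ :: "nat \<Rightarrow> real" where
  "ramQ n = (\<Sum>i=0..n. (\<Prod>j<i. real (n - j)) / real n ^ i)"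

end

theory Submission
  imports Defs "HOL-Computational_Algebra.Polynomial"
begin

text \<open>Conditioning on the first draw, the expectation started from (c n, b m) satisfies a
  two-term recursion in (n, m). The closed form, a sum over l of explicit weights times D(l),
  satisfies the same recursion, and for D(l) = \<Sum>_k a_l(k) k^(s+1) with
  a_l(k) = l(l-1)\<cdots>(l-k+1)/l^k (so that Q(l) = \<Sum>_k a_l(k)) it has the right
  values on the boundary m = 0: there an n-th finite difference in l kills every term except
  k = l = n. This D(l) equals f_(s+1)(l) Q(l) + g_(s+1)(l), because both sides solve
  the linear recurrence which the differential equations of F and G impose on their coefficients.

  That recurrence, x_(i+1) = u (x_i - \<Sum>_j binom(i,j) (-1)^(i-j) x_j) + d u (-1)^i with u = l
  and d = 0 for f, d = 1 for g, turns multiplication by the variable into u times a backward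
  difference. Iterating antidifferences therefore yields a monic polynomial M_s of degree 2s with
  \<Sum>_i m_(i,s) x_(i+1) = d s! 2^s u^(s+1) for every solution x; this kills the Q-part of D and
  leaves s! 2^s l^(s+1).\<close>

section \<open>The coefficient recurrence of F and G\<close>

lemma fps_nth_urnA_0: "fps_nth urnA 0 = 0"
  by (simp add: urnA_def)

lemma fps_deriv_urnA: "fps_deriv urnA = 1 - fps_exp (-1)"
  by (simp add: urnA_def flip: fps_const_neg)

lemma fps_deriv_urnF: "fps_deriv (urnF u) = fps_const u * (1 - fps_exp (-1)) * urnF u"
  unfolding urnF_def
  by (simp add: fps_compose_deriv[OF fps_nth_urnA_0] fps_deriv_urnA
      fps_compose_mult_distrib[OF fps_nth_urnA_0] mult_ac)

lemma urnF_mult_exp_neg: "urnF u * fps_compose (fps_exp (-u)) urnA = 1"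
proof -
  have "urnF u * fps_compose (fps_exp (-u)) urnA = fps_compose (fps_exp u * fps_exp (-u)) urnA"
    unfolding urnF_def by (simp add: fps_compose_mult_distrib[OF fps_nth_urnA_0])
  also have "fps_exp u * fps_exp (-u) = (1::real fps)"
    by (simp flip: fps_exp_add_mult)
  finally show ?thesis by simp
qed

lemma fps_deriv_urnG:
  "fps_deriv (urnG u) = fps_const u * (1 - fps_exp (-1)) * urnG u + fps_const u * fps_exp (-1)"
proof -
  define I where "I = fps_integral (fps_const u * fps_exp (-1) * fps_compose (fps_exp (-u)) urnA) (0::real)"
  have "urnF u * fps_deriv I = fps_const u * fps_exp (-1) * (urnF u * fps_compose (fps_exp (-u)) urnA)"
    unfolding I_def by (simp add: fps_deriv_fps_integral mult_ac)
  then have "urnF u * fps_deriv I = fps_const u * fps_exp (-1)"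
    by (simp add: urnF_mult_exp_neg)
  moreover have "fps_deriv (urnG u) = fps_deriv (urnF u) * I + urnF u * fps_deriv I"
    unfolding urnG_def I_def by simp
  ultimately show ?thesis
    unfolding urnG_def I_def fps_deriv_urnF by (simp add: mult_ac)
qed

lemma f_poly_0 [simp]: "f_poly 0 u = 1"
  by (simp add: f_poly_def urnF_def)

lemma g_poly_0 [simp]: "g_poly 0 u = 0"
  by (simp add: g_poly_def urnG_def)

text \<open>The coefficient form of X' = u (1 - e^(-z)) X + d u e^(-z) for the exponential
  generating function X of x.\<close>
definition urn_recurrence :: "real \<Rightarrow> real \<Rightarrow> (nat \<Rightarrow> real) \<Rightarrow> bool" where
  "urn_recurrence u d x \<longleftrightarrow>
     (\<forall>i. x (Suc i) = u * (x i - (\<Sum>j\<le>i. real (i choose j) * (-1) ^ (i - j) * x j)) + d * u * (-1) ^ i)"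

lemma fps_nth_one_minus_exp_neg:
  "fps_nth (1 - fps_exp (-1::real)) k = (if k = 0 then 1 else 0) - (-1) ^ k / fact k"
  by (cases k) (auto simp: algebra_simps)

lemma urn_recurrence_fps_coeffs:
  fixes X :: "real fps"
  assumes "fps_deriv X = fps_const u * (1 - fps_exp (-1)) * X + fps_const (d * u) * fps_exp (-1)"
  shows "urn_recurrence u d (\<lambda>i. fact i * fps_nth X i)"
  unfolding urn_recurrence_def
proof
  fix i
  have "real (Suc i) * fps_nth X (Suc i) = fps_nth (fps_deriv X) i"
    by simp
  also have "\<dots> = u * (\<Sum>j\<le>i. fps_nth X j * fps_nth (1 - fps_exp (-1)) (i - j)) + d * u * (-1) ^ i / fact i"
    unfolding assms fps_add_nth mult.assoc mult.commute[of "1 - fps_exp (-1)" X] fps_mult_left_const_nth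
    by (simp add: fps_mult_nth atLeast0AtMost)
  also have "(\<Sum>j\<le>i. fps_nth X j * fps_nth (1 - fps_exp (-1)) (i - j))
      = fps_nth X i - (\<Sum>j\<le>i. fps_nth X j * (-1) ^ (i - j) / fact (i - j))"
  proof -
    have "(\<Sum>j\<le>i. fps_nth X j * fps_nth (1 - fps_exp (-1)) (i - j))
        = (\<Sum>j\<le>i. (if j = i then fps_nth X i else 0) - fps_nth X j * (-1) ^ (i - j) / fact (i - j))"
      by (rule sum.cong) (auto simp: fps_nth_one_minus_exp_neg right_diff_distrib)
    then show ?thesis by (simp add: sum_subtractf)
  qed
  finally have "real (Suc i) * fps_nth X (Suc i)
      = u * (fps_nth X i - (\<Sum>j\<le>i. fps_nth X j * (-1) ^ (i - j) / fact (i - j))) + d * u * (-1) ^ i / fact i" .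
  moreover have "fact i * (\<Sum>j\<le>i. fps_nth X j * (-1) ^ (i - j) / fact (i - j))
      = (\<Sum>j\<le>i. real (i choose j) * (-1) ^ (i - j) * (fact j * fps_nth X j))"
    unfolding sum_distrib_left by (rule sum.cong) (auto simp: binomial_fact field_simps)
  ultimately show "fact (Suc i) * fps_nth X (Suc i) = u * (fact i * fps_nth X i
      - (\<Sum>j\<le>i. real (i choose j) * (-1) ^ (i - j) * (fact j * fps_nth X j))) + d * u * (-1) ^ i"
    by (simp add: field_simps)
qed

lemma urn_recurrence_f_poly: "urn_recurrence u 0 (\<lambda>i. f_poly i u)"
  unfolding f_poly_def by (rule urn_recurrence_fps_coeffs) (simp add: fps_deriv_urnF)

lemma urn_recurrence_g_poly: "urn_recurrence u 1 (\<lambda>i. g_poly i u)"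
  unfolding g_poly_def by (rule urn_recurrence_fps_coeffs) (simp add: fps_deriv_urnG)

lemma urn_recurrence_unique:
  assumes "urn_recurrence u d x" "urn_recurrence u d y" "x 0 = y 0"
  shows "x i = y i"
proof (induction i rule: less_induct)
  case (less i)
  show ?case
  proof (cases i)
    case 0
    then show ?thesis using assms(3) by simp
  next
    case (Suc i')
    have "(\<Sum>j\<le>i'. real (i' choose j) * (-1) ^ (i' - j) * x j) = (\<Sum>j\<le>i'. real (i' choose j) * (-1) ^ (i' - j) * y j)"
      using less Suc by (intro sum.cong) auto
    with less Suc assms(1,2) show ?thesis unfolding urn_recurrence_def by simp
  qed
qed

lemma urn_recurrence_affine:
  assumes "urn_recurrence u 0 f" "urn_recurrence u 1 g"
  shows "urn_recurrence u 1 (\<lambda>i. f i * q + g i)"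
  unfolding urn_recurrence_def
proof
  fix i
  have sum_eq: "(\<Sum>j\<le>i. real (i choose j) * (-1) ^ (i - j) * (f j * q + g j))
      = q * (\<Sum>j\<le>i. real (i choose j) * (-1) ^ (i - j) * f j) + (\<Sum>j\<le>i. real (i choose j) * (-1) ^ (i - j) * g j)"
    by (simp add: sum_distrib_left sum.distrib algebra_simps)
  have ef: "f (Suc i) = u * (f i - (\<Sum>j\<le>i. real (i choose j) * (-1) ^ (i - j) * f j))"
    using assms(1) unfolding urn_recurrence_def by simp
  have eg: "g (Suc i) = u * (g i - (\<Sum>j\<le>i. real (i choose j) * (-1) ^ (i - j) * g j)) + u * (-1) ^ i"
    using assms(2) unfolding urn_recurrence_def by simp
  show "f (Suc i) * q + g (Suc i) = u * (f i * q + g i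
      - (\<Sum>j\<le>i. real (i choose j) * (-1) ^ (i - j) * (f j * q + g j))) + 1 * u * (-1) ^ i"
    unfolding sum_eq ef eg by (simp add: algebra_simps)
qed

section \<open>Ramanujan moments\<close>

definition ramanujan_term :: "nat \<Rightarrow> nat \<Rightarrow> real" where
  "ramanujan_term l k = (\<Prod>j<k. real (l - j)) / real l ^ k"

definition ramanujan_moment :: "nat \<Rightarrow> nat \<Rightarrow> real" where
  "ramanujan_moment l i = (\<Sum>k=0..l. ramanujan_term l k * real k ^ i)"

lemma ramanujan_moment_0: "ramanujan_moment l 0 = ramQ l"
  by (simp add: ramanujan_moment_def ramQ_def ramanujan_term_def)

lemma ramanujan_term_0 [simp]: "ramanujan_term l 0 = 1"
  by (simp add: ramanujan_term_def)

lemma ramanujan_term_eq_0: "l < k \<Longrightarrow> ramanujan_term l k = 0"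
  unfolding ramanujan_term_def by (subst prod_zero) (auto intro!: bexI[of _ l])

lemma ramanujan_term_times:
  assumes "l \<ge> 1"
  shows "ramanujan_term l k * real k = real l * (ramanujan_term l k - ramanujan_term l (Suc k))"
proof -
  have "ramanujan_term l (Suc k) = ramanujan_term l k * real (l - k) / real l"
    using assms by (simp add: ramanujan_term_def field_simps)
  moreover have "ramanujan_term l k * real k = ramanujan_term l k * (real l - real (l - k))"
    by (cases "k \<le> l") (simp_all add: of_nat_diff ramanujan_term_eq_0)
  ultimately show ?thesis
    using assms by (simp add: field_simps)
qed

lemma binomial_alternating_power: "(\<Sum>j\<le>i. real (i choose j) * (-1) ^ (i - j) * x ^ j) = (x - 1) ^ i"
  using binomial_ring[of x "-1" i] by (simp add: mult_ac)

lemma urn_recurrence_ramanujan_moment: "urn_recurrence (real l) 1 (ramanujan_moment l)"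
  unfolding urn_recurrence_def
proof
  fix i
  have binomial_transform: "(\<Sum>j\<le>i. real (i choose j) * (-1) ^ (i - j) * ramanujan_moment l j)
      = (\<Sum>k=0..l. ramanujan_term l k * (real k - 1) ^ i)"
  proof -
    have "(\<Sum>j\<le>i. real (i choose j) * (-1) ^ (i - j) * ramanujan_moment l j)
        = (\<Sum>k=0..l. ramanujan_term l k * (\<Sum>j\<le>i. real (i choose j) * (-1) ^ (i - j) * real k ^ j))"
      unfolding ramanujan_moment_def sum_distrib_left by (subst sum.swap) (simp add: mult_ac)
    then show ?thesis by (simp add: binomial_alternating_power)
  qed
  show "ramanujan_moment l (Suc i) = real l * (ramanujan_moment l i
      - (\<Sum>j\<le>i. real (i choose j) * (-1) ^ (i - j) * ramanujan_moment l j)) + 1 * real l * (-1) ^ i"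
  proof (cases "l = 0")
    case True
    then show ?thesis by (simp add: ramanujan_moment_def)
  next
    case False
    then have l: "l \<ge> 1" by simp
    have "ramanujan_moment l (Suc i)
        = (\<Sum>k=0..l. real l * (ramanujan_term l k - ramanujan_term l (Suc k)) * real k ^ i)"
      unfolding ramanujan_moment_def
      by (rule sum.cong) (auto simp: ramanujan_term_times[OF l, symmetric] mult_ac)
    also have "\<dots> = real l * (ramanujan_moment l i
        - (\<Sum>k=0..l. ramanujan_term l (Suc k) * (real (Suc k) - 1) ^ i))"
      by (simp add: ramanujan_moment_def sum_distrib_left sum_subtractf algebra_simps)
    also have "(\<Sum>k=0..l. ramanujan_term l (Suc k) * (real (Suc k) - 1) ^ i)
        = (\<Sum>k=0..Suc l. ramanujan_term l k * (real k - 1) ^ i) - (-1) ^ i"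
      by (subst sum.atLeast0_atMost_Suc_shift) simp
    also have "\<dots> = (\<Sum>k=0..l. ramanujan_term l k * (real k - 1) ^ i) - (-1) ^ i"
      by (simp add: ramanujan_term_eq_0)
    finally show ?thesis
      unfolding binomial_transform by (simp add: algebra_simps)
  qed
qed

text \<open>Both sides solve the recurrence with u = l and d = 1 and agree at j = 0.\<close>
lemma f_poly_ramQ_add_g_poly: "f_poly j (real l) * ramQ l + g_poly j (real l) = ramanujan_moment l j"
  using urn_recurrence_unique[OF urn_recurrence_affine[OF urn_recurrence_f_poly urn_recurrence_g_poly]
      urn_recurrence_ramanujan_moment]
  by (simp add: ramanujan_moment_0)

lemma alternating_binomial_sum_power_eq_0:
  "j < n \<Longrightarrow> (\<Sum>l=0..n. (-1) ^ (n - l) * real (n choose l) * real l ^ j) = 0"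
proof (induction n arbitrary: j)
  case 0
  then show ?case by simp
next
  case (Suc n j)
  show ?case
  proof (cases j)
    case 0
    then show ?thesis
      using binomial_ring[of "1::real" "-1" "Suc n"] by (simp add: atMost_atLeast0 mult_ac)
  next
    case (Suc j')
    have shift: "real (Suc l) ^ j' = (\<Sum>t\<le>j'. real (j' choose t) * real l ^ t)" for l
      using binomial_ring[of "real l" 1 j'] by (simp add: add.commute)
    have "(\<Sum>l=0..Suc n. (-1) ^ (Suc n - l) * real (Suc n choose l) * real l ^ j)
        = (\<Sum>l=0..n. (-1) ^ (n - l) * real (Suc n choose Suc l) * real (Suc l) ^ j)"
      by (subst sum.atLeast0_atMost_Suc_shift) (simp add: Suc)
    also have "\<dots> = real (Suc n) * (\<Sum>l=0..n. (-1) ^ (n - l) * real (n choose l) * real (Suc l) ^ j')"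
      unfolding sum_distrib_left
    proof (rule sum.cong)
      fix l
      have "real (Suc n choose Suc l) * real (Suc l) = real (Suc n) * real (n choose l)"
        by (metis Suc_times_binomial mult.commute of_nat_mult)
      then show "(-1) ^ (n - l) * real (Suc n choose Suc l) * real (Suc l) ^ j
          = real (Suc n) * ((-1) ^ (n - l) * real (n choose l) * real (Suc l) ^ j')"
        by (simp add: Suc)
    qed simp
    also have "\<dots> = real (Suc n) * (\<Sum>t\<le>j'. real (j' choose t)
        * (\<Sum>l=0..n. (-1) ^ (n - l) * real (n choose l) * real l ^ t))"
      unfolding shift by (simp add: sum_distrib_left sum_distrib_right mult_ac) (rule sum.swap)
    also have "\<dots> = 0"
      using Suc.IH Suc.prems \<open>j = Suc j'\<close> by simp
    finally show ?thesis .
  qed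
qed

lemma alternating_binomial_sum_poly_eq_0:
  fixes p :: "real poly"
  assumes "degree p < n"
  shows "(\<Sum>l=0..n. (-1) ^ (n - l) * real (n choose l) * poly p (real l)) = 0"
proof -
  have "(\<Sum>l=0..n. (-1) ^ (n - l) * real (n choose l) * poly p (real l))
      = (\<Sum>t\<le>degree p. coeff p t * (\<Sum>l=0..n. (-1) ^ (n - l) * real (n choose l) * real l ^ t))"
    unfolding poly_altdef sum_distrib_left sum_distrib_right
    by (subst sum.swap) (simp add: mult_ac)
  also have "\<dots> = 0"
    using assms by (simp add: alternating_binomial_sum_power_eq_0)
  finally show ?thesis .
qed

lemma alternating_binomial_sum_ramanujan_term_eq_0:
  assumes "k < n"
  shows "(\<Sum>l=0..n. (-1) ^ (n - l) * real (n choose l) * (real l ^ (n - 1) * ramanujan_term l k)) = 0"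
proof -
  define p :: "real poly" where "p = (\<Prod>j<k. [:- real j, 1:]) * monom 1 (n - 1 - k)"
  have "degree p \<le> k + (n - 1 - k)"
    unfolding p_def
    by (rule order.trans[OF degree_mult_le], rule add_mono,
        rule order.trans[OF degree_prod_sum_le]) (simp_all add: degree_monom_eq)
  with assms have "degree p < n"
    by linarith
  moreover have "real l ^ (n - 1) * ramanujan_term l k = poly p (real l)" for l
  proof (cases "k \<le> l")
    case True
    then have "(\<Prod>j<k. real (l - j)) = (\<Prod>j<k. real l - real j)"
      by (intro prod.cong) (auto simp: of_nat_diff)
    moreover have "real l ^ (n - 1) = real l ^ k * real l ^ (n - 1 - k)"
      using assms by (simp flip: power_add)
    ultimately show ?thesis
      using True by (cases "l = 0") (simp_all add: p_def ramanujan_term_def poly_prod poly_monom)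
  next
    case False
    then have "(\<Prod>j<k. real l - real j) = 0"
      by (subst prod_zero) (auto intro!: bexI[of _ l])
    with False show ?thesis
      by (simp add: p_def poly_prod poly_monom ramanujan_term_eq_0)
  qed
  ultimately show ?thesis
    using alternating_binomial_sum_poly_eq_0 by simp
qed

text \<open>For k < n, l^(n-1) a_l(k) is a polynomial in l of degree less than n, so only k = n
  survives the n-th difference, and there only l = n.\<close>
lemma alternating_binomial_sum_ramanujan_moment:
  assumes "n \<ge> 1"
  shows "(\<Sum>l=0..n. (-1) ^ (n - l) * real (n choose l) * real l ^ (n - 1) * ramanujan_moment l (Suc s))
    = fact n * real n ^ s"
proof -
  let ?\<Delta> = "\<lambda>k. \<Sum>l=0..n. (-1) ^ (n - l) * real (n choose l) * (real l ^ (n - 1) * ramanujan_term l k)"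
  have "(\<Sum>l=0..n. (-1) ^ (n - l) * real (n choose l) * real l ^ (n - 1) * ramanujan_moment l (Suc s))
      = (\<Sum>l=0..n. \<Sum>k=0..n. real k ^ Suc s * ((-1) ^ (n - l) * real (n choose l) * (real l ^ (n - 1) * ramanujan_term l k)))"
  proof (rule sum.cong)
    fix l assume "l \<in> {0..n}"
    then have "ramanujan_moment l (Suc s) = (\<Sum>k=0..n. ramanujan_term l k * real k ^ Suc s)"
      unfolding ramanujan_moment_def by (intro sum.mono_neutral_left) (auto simp: ramanujan_term_eq_0)
    then show "(-1) ^ (n - l) * real (n choose l) * real l ^ (n - 1) * ramanujan_moment l (Suc s)
        = (\<Sum>k=0..n. real k ^ Suc s * ((-1) ^ (n - l) * real (n choose l) * (real l ^ (n - 1) * ramanujan_term l k)))"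
      by (simp add: sum_distrib_left mult_ac)
  qed simp
  also have "\<dots> = (\<Sum>k=0..n. real k ^ Suc s * ?\<Delta> k)"
    by (subst sum.swap) (simp add: sum_distrib_left)
  also have "\<dots> = real n ^ Suc s * ?\<Delta> n"
    using assms alternating_binomial_sum_ramanujan_term_eq_0[of _ n]
    by (cases n) (simp_all add: sum.atLeast0_atMost_Suc)
  also have "?\<Delta> n = real n ^ (n - 1) * ramanujan_term n n"
    using assms by (cases n) (simp_all add: sum.atLeast0_atMost_Suc ramanujan_term_eq_0)
  also have "real n ^ Suc s * (real n ^ (n - 1) * ramanujan_term n n) = fact n * real n ^ s"
  proof -
    have rt: "ramanujan_term n n = fact n / real n ^ n"
      unfolding ramanujan_term_def fact_prod_rev[where 'a=real] atLeast0LessThan of_nat_prod by simp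
    moreover have "Suc s + (n - 1) = s + n"
      using assms by simp
    then have "real n ^ Suc s * real n ^ (n - 1) = real n ^ s * real n ^ n"
      by (metis power_add)
    then have "real n ^ Suc s * (real n ^ (n - 1) * ramanujan_term n n) = real n ^ s * fact n * (real n ^ n / real n ^ n)"
      unfolding rt by (metis (no_types, lifting) mult.assoc mult.commute times_divide_eq_right)
    then show ?thesis
      using assms by simp
  qed
  finally show ?thesis .
qed

section \<open>The urn\<close>

lemma urn_exp_stopped:
  "b \<ge> 1 \<Longrightarrow> c \<ge> 1 \<Longrightarrow> w = 0 \<or> k = 0 \<Longrightarrow> urn_exp b c h w k = h w"
  by (subst urn_exp.simps) simp

lemma urn_exp_step:
  "b \<ge> 1 \<Longrightarrow> c \<ge> 1 \<Longrightarrow> w \<ge> 1 \<Longrightarrow> k \<ge> 1 \<Longrightarrow> urn_exp b c h w k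
     = real w / real (w + k) * urn_exp b c h w (k - b) + real k / real (w + k) * urn_exp b c h (w - c) k"
  by (subst urn_exp.simps) simp

lemma urn_exp_sum:
  assumes "b \<ge> 1" "c \<ge> 1"
  shows "urn_exp b c (\<lambda>y. \<Sum>i\<in>A. a i * h i y) w k = (\<Sum>i\<in>A. a i * urn_exp b c (h i) w k)"
proof (induction "w + k" arbitrary: w k rule: less_induct)
  case less
  show ?case
  proof (cases "w = 0 \<or> k = 0")
    case True
    with assms show ?thesis
      by (simp add: urn_exp_stopped)
  next
    case False
    then have w: "w \<ge> 1" and k: "k \<ge> 1"
      by auto
    have "urn_exp b c (\<lambda>y. \<Sum>i\<in>A. a i * h i y) w (k - b) = (\<Sum>i\<in>A. a i * urn_exp b c (h i) w (k - b))"
      "urn_exp b c (\<lambda>y. \<Sum>i\<in>A. a i * h i y) (w - c) k = (\<Sum>i\<in>A. a i * urn_exp b c (h i) (w - c) k)"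
      using less.hyps[of w "k - b"] less.hyps[of "w - c" k] assms w k by simp_all
    then show ?thesis
      unfolding urn_exp_step[OF assms w k]
      by (simp add: sum_distrib_left sum.distrib algebra_simps)
  qed
qed

text \<open>For r = c/b this is the paper's weight
  binom(n+m, n-l) binom(m+l, l) r^m / ((n+m)! binom(m + r l, m)) l^(m+n-1),
  rewritten with binom(m + r l, m) = (r l + 1)^(m) / m!.\<close>
definition corral_weight :: "real \<Rightarrow> nat \<Rightarrow> nat \<Rightarrow> nat \<Rightarrow> real" where
  "corral_weight r n m l = (-1) ^ (n - l) * real (n choose l) / fact n * r ^ m
     / pochhammer (r * real l + 1) m * real l ^ (m + n - 1)"

definition corral_sum :: "real \<Rightarrow> (nat \<Rightarrow> real) \<Rightarrow> nat \<Rightarrow> nat \<Rightarrow> real" where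
  "corral_sum r D n m = (\<Sum>l=0..n. corral_weight r n m l * D l)"

lemma alternating_binomial_over_fact_Suc:
  assumes "l \<le> Suc n"
  shows "(-1) ^ (n - l) * real (n choose l) / fact n
    = - ((-1) ^ (Suc n - l) * real (Suc n choose l) / fact (Suc n)) * (real (Suc n) - real l)"
proof (cases "l \<le> n")
  case True
  have absorb: "real (Suc n choose l) * (real (Suc n) - real l) = real (Suc n) * real (n choose l)"
  proof -
    have "real (Suc n - l) * real (Suc n choose l) = real (Suc n) * real (n choose l)"
      by (metis binomial_absorb_comp diff_Suc_1 of_nat_mult)
    moreover have "real (Suc n - l) = real (Suc n) - real l"
      using True by (intro of_nat_diff) simp
    ultimately show ?thesis
      by (metis mult.commute)
  qed
  have "Suc n - l = Suc (n - l)"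
    using True by simp
  then have "- ((-1) ^ (Suc n - l) * real (Suc n choose l) / fact (Suc n)) * (real (Suc n) - real l)
      = (-1) ^ (n - l) * (real (Suc n choose l) * (real (Suc n) - real l)) / fact (Suc n)"
    by simp
  also have "\<dots> = (-1) ^ (n - l) * real (n choose l) / fact n"
    unfolding absorb by simp
  finally show ?thesis ..
next
  case False
  with assms show ?thesis
    by (simp add: binomial_eq_0)
qed

lemma corral_weight_rec:
  assumes "r \<ge> 0" "l \<le> Suc n"
  shows "corral_weight r (Suc n) (Suc m) l * (r * real (Suc n) + real (Suc m))
    = r * real (Suc n) * corral_weight r (Suc n) m l + real (Suc m) * corral_weight r n (Suc m) l"
proof -
  define A where "A = (-1) ^ (Suc n - l) * real (Suc n choose l) / fact (Suc n)"
  define P where "P = pochhammer (r * real l + 1) m"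
  define Q where "Q = r * real l + real (Suc m)"
  define K where "K = A * r ^ m / P * real l ^ (m + n)"
  have "Q > 0"
    unfolding Q_def using assms(1) by (simp add: add_nonneg_pos)
  have poch: "pochhammer (r * real l + 1) (Suc m) = P * Q"
    unfolding P_def Q_def by (simp add: pochhammer_Suc algebra_simps)
  have w1: "corral_weight r (Suc n) m l = K"
    unfolding corral_weight_def K_def A_def P_def by simp
  have w2: "corral_weight r (Suc n) (Suc m) l = K * r * real l / Q"
    unfolding corral_weight_def K_def A_def poch by (simp add: mult_ac)
  have w3: "corral_weight r n (Suc m) l = - K * (real (Suc n) - real l) * r / Q"
    unfolding corral_weight_def K_def poch alternating_binomial_over_fact_Suc[OF assms(2)] A_def
    by (simp add: mult_ac)
  have "K * r * real l * (r * real (Suc n) + real (Suc m))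
      = r * real (Suc n) * K * Q + real (Suc m) * (- K * (real (Suc n) - real l) * r)"
    unfolding Q_def by (simp add: algebra_simps)
  then show ?thesis
    unfolding w1 w2 w3 using \<open>Q > 0\<close> by (simp add: divide_simps)
qed

lemma corral_sum_rec:
  fixes n m :: nat
  assumes "r \<ge> 0"
  defines "\<alpha> \<equiv> r * real (Suc n) / (r * real (Suc n) + real (Suc m))"
    and "\<beta> \<equiv> real (Suc m) / (r * real (Suc n) + real (Suc m))"
  shows "corral_sum r D (Suc n) (Suc m) = \<alpha> * corral_sum r D (Suc n) m + \<beta> * corral_sum r D n (Suc m)"
proof -
  have "r * real (Suc n) + real (Suc m) > 0"
    using assms(1) by (intro add_nonneg_pos) simp_all
  then have weight: "corral_weight r (Suc n) (Suc m) l = \<alpha> * corral_weight r (Suc n) m l + \<beta> * corral_weight r n (Suc m) l"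
    if "l \<le> Suc n" for l
    using corral_weight_rec[OF assms(1) that, of m]
    unfolding \<alpha>_def \<beta>_def by (simp add: divide_simps)
  have "corral_sum r D (Suc n) (Suc m)
      = (\<Sum>l=0..Suc n. \<alpha> * (corral_weight r (Suc n) m l * D l) + \<beta> * (corral_weight r n (Suc m) l * D l))"
    unfolding corral_sum_def by (rule sum.cong) (simp_all add: weight distrib_right)
  also have "\<dots> = \<alpha> * corral_sum r D (Suc n) m + \<beta> * (\<Sum>l=0..Suc n. corral_weight r n (Suc m) l * D l)"
    by (simp only: sum.distrib corral_sum_def sum_distrib_left)
  also have "(\<Sum>l=0..Suc n. corral_weight r n (Suc m) l * D l) = corral_sum r D n (Suc m)"
    by (simp add: corral_sum_def corral_weight_def)
  finally show ?thesis .
qed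

text \<open>Both sides satisfy the recursion obtained by conditioning on the first draw
  (corral_sum_rec), and they agree where the urn stops.\<close>
lemma urn_exp_eq_corral_sum:
  assumes "b \<ge> 1" "c \<ge> 1" "h 0 = 0" "D 0 = 0"
    and boundary: "\<And>n. n \<ge> 1 \<Longrightarrow> corral_sum (real c / real b) D n 0 = h (c * n)"
  shows "urn_exp b c h (c * n) (b * m) = corral_sum (real c / real b) D n m"
proof (induction "n + m" arbitrary: n m rule: less_induct)
  case less
  define r where "r = real c / real b"
  consider "n = 0" | "n \<ge> 1" "m = 0" | n' m' where "n = Suc n'" "m = Suc m'"
    by (cases n; cases m) auto
  then show ?case
  proof cases
    case 1
    then show ?thesis
      using assms by (simp add: urn_exp_stopped corral_sum_def)
  next
    case 2
    then show ?thesis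
      using assms by (simp add: urn_exp_stopped)
  next
    case 3
    have "r \<ge> 0"
      by (simp add: r_def)
    have denominator: "r * real n + real m = real (c * n + b * m) / real b"
      using assms by (simp add: r_def field_simps)
    have "c * n - c = c * n'" "b * m - b = b * m'"
      using 3 by simp_all
    then have "urn_exp b c h (c * n) (b * m)
        = real (c * n) / real (c * n + b * m) * urn_exp b c h (c * n) (b * m')
          + real (b * m) / real (c * n + b * m) * urn_exp b c h (c * n') (b * m)"
      using urn_exp_step[of b c "c * n" "b * m" h] assms 3 by simp
    also have "urn_exp b c h (c * n) (b * m') = corral_sum r D n m'"
      using less.hyps[of n m'] 3 by (simp add: r_def)
    also have "urn_exp b c h (c * n') (b * m) = corral_sum r D n' m"
      using less.hyps[of n' m] 3 by (simp add: r_def)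
    also have "real (c * n) / real (c * n + b * m) = r * real n / (r * real n + real m)"
      using assms unfolding denominator by (simp add: r_def)
    also have "real (b * m) / real (c * n + b * m) = real m / (r * real n + real m)"
      using assms unfolding denominator by simp
    finally show ?thesis
      using corral_sum_rec[OF \<open>r \<ge> 0\<close>, where n = n' and m = m' and D = D] 3 by (simp add: r_def)
  qed
qed

lemma urn_exp_power:
  assumes "b \<ge> 1" "c \<ge> 1" "s \<ge> 1"
  shows "urn_exp b c (\<lambda>y. (real y / real c) ^ s) (c * n) (b * m)
    = corral_sum (real c / real b) (\<lambda>l. ramanujan_moment l (Suc s)) n m"
proof (rule urn_exp_eq_corral_sum)
  fix n :: nat
  assume "n \<ge> 1"
  then show "corral_sum (real c / real b) (\<lambda>l. ramanujan_moment l (Suc s)) n 0 = (real (c * n) / real c) ^ s"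
    using alternating_binomial_sum_ramanujan_moment[of n s] assms
    by (simp add: corral_sum_def corral_weight_def sum_divide_distrib[symmetric] mult_ac)
qed (use assms in \<open>simp_all add: ramanujan_moment_def\<close>)

section \<open>Moment polynomials\<close>

definition moment_functional :: "(nat \<Rightarrow> real) \<Rightarrow> real poly \<Rightarrow> real" where
  "moment_functional x p = (\<Sum>i\<le>degree p. coeff p i * x i)"

lemma moment_functional_altdef:
  "degree p \<le> N \<Longrightarrow> moment_functional x p = (\<Sum>i\<le>N. coeff p i * x i)"
  unfolding moment_functional_def by (rule sum.mono_neutral_left) (auto simp: coeff_eq_0)

lemma moment_functional_add: "moment_functional x (p + q) = moment_functional x p + moment_functional x q"
  using degree_add_le[of p "max (degree p) (degree q)" q]
  by (simp add: moment_functional_altdef[of _ "max (degree p) (degree q)"] sum.distrib algebra_simps)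

lemma moment_functional_diff: "moment_functional x (p - q) = moment_functional x p - moment_functional x q"
  using moment_functional_add[of x "p - q" q] by simp

lemma moment_functional_smult: "moment_functional x (smult a p) = a * moment_functional x p"
  by (simp add: moment_functional_altdef[of "smult a p" "degree p"] moment_functional_def
      sum_distrib_left mult_ac)

lemma moment_functional_sum:
  "finite A \<Longrightarrow> moment_functional x (\<Sum>i\<in>A. p i) = (\<Sum>i\<in>A. moment_functional x (p i))"
  by (induction A rule: finite_induct) (simp_all add: moment_functional_add moment_functional_def[of x 0])

lemma moment_functional_pCons_0:
  assumes "degree p \<le> N"
  shows "moment_functional x (pCons 0 p) = (\<Sum>i\<le>N. coeff p i * x (Suc i))"
proof -
  have "degree (pCons 0 p) \<le> Suc N"
    using assms degree_pCons_le[of 0 p] by linarith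
  show ?thesis
    unfolding moment_functional_altdef[OF \<open>degree (pCons 0 p) \<le> Suc N\<close>] sum.atMost_Suc_shift by simp
qed

lemma moment_functional_shift_power:
  "moment_functional x ([:-1, 1:] ^ i) = (\<Sum>j\<le>i. real (i choose j) * (-1) ^ (i - j) * x j)"
  unfolding moment_functional_def degree_linear_power
  by (rule sum.cong) (simp_all add: coeff_linear_poly_power)

lemma pcompose_eq_sum_smult: "p \<circ>\<^sub>p q = (\<Sum>i\<le>degree p. smult (coeff p i) (q ^ i))"
  for p q :: "real poly"
  by (rule poly_ext) (simp add: poly_pcompose poly_sum poly_altdef[of p])

lemma moment_functional_pCons_0_recurrence:
  assumes "urn_recurrence u d x"
  shows "moment_functional x (pCons 0 p)
    = u * moment_functional x (p - p \<circ>\<^sub>p [:-1, 1:]) + d * u * poly p (-1)"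
proof -
  have "moment_functional x (pCons 0 p)
      = (\<Sum>i\<le>degree p. coeff p i * (u * (x i - moment_functional x ([:-1, 1:] ^ i)) + d * u * (-1) ^ i))"
    using assms
    unfolding moment_functional_pCons_0[OF order.refl] moment_functional_shift_power urn_recurrence_def
    by simp
  also have "\<dots> = u * (moment_functional x p - (\<Sum>i\<le>degree p. coeff p i * moment_functional x ([:-1, 1:] ^ i)))
      + d * u * (\<Sum>i\<le>degree p. coeff p i * (-1) ^ i)"
    unfolding moment_functional_def
    by (simp add: algebra_simps sum.distrib sum_distrib_left sum_subtractf)
  also have "(\<Sum>i\<le>degree p. coeff p i * moment_functional x ([:-1, 1:] ^ i)) = moment_functional x (p \<circ>\<^sub>p [:-1, 1:])"
    by (simp add: pcompose_eq_sum_smult[of p] moment_functional_sum moment_functional_smult)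
  finally show ?thesis
    by (simp add: moment_functional_diff poly_altdef)
qed

lemma backward_difference_monom:
  "coeff (monom a k - monom a k \<circ>\<^sub>p [:-1, 1:]) j
    = (if k \<le> j then 0 else - a * real (k choose j) * (-1) ^ (k - j))"
proof -
  have "monom a k \<circ>\<^sub>p [:-1, 1:] = smult a ([:-1, 1:] ^ k)"
    by (rule poly_ext) (simp add: poly_pcompose poly_monom)
  then show ?thesis
    by (auto simp: coeff_monom coeff_linear_poly_power coeff_eq_0 degree_linear_power)
qed

lemma backward_difference_surj:
  assumes "degree q \<le> d"
  shows "\<exists>p. p - p \<circ>\<^sub>p [:-1, 1:] = q \<and> degree p \<le> Suc d \<and> coeff p (Suc d) = coeff q d / real (Suc d)"
  using assms
proof (induction d arbitrary: q)
  case 0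
  then have "q = [:coeff q 0:]"
    by (metis degree_0_id le_0_eq)
  moreover have "monom c 1 - monom c 1 \<circ>\<^sub>p [:-1, 1:] = [:c:]" for c :: real
    by (rule poly_ext) (simp add: poly_pcompose poly_monom algebra_simps)
  ultimately show ?case
    by (intro exI[of _ "monom (coeff q 0) 1"]) (simp add: degree_monom_le)
next
  case (Suc d)
  define p0 where "p0 = monom (coeff q (Suc d) / real (Suc (Suc d))) (Suc (Suc d))"
  have "degree (q - (p0 - p0 \<circ>\<^sub>p [:-1, 1:])) \<le> d"
  proof (rule degree_le, intro allI impI)
    fix j
    assume "d < j"
    then consider "j = Suc d" | "Suc (Suc d) \<le> j"
      by linarith
    then show "coeff (q - (p0 - p0 \<circ>\<^sub>p [:-1, 1:])) j = 0"
      using Suc.prems unfolding p0_def coeff_diff[of q] backward_difference_monom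
      by cases (simp_all add: coeff_eq_0)
  qed
  then obtain p1 where p1: "p1 - p1 \<circ>\<^sub>p [:-1, 1:] = q - (p0 - p0 \<circ>\<^sub>p [:-1, 1:])" "degree p1 \<le> Suc d"
    using Suc.IH by blast
  have "(p0 + p1) - (p0 + p1) \<circ>\<^sub>p [:-1, 1:] = (p0 - p0 \<circ>\<^sub>p [:-1, 1:]) + (p1 - p1 \<circ>\<^sub>p [:-1, 1:])"
    by (simp add: pcompose_add)
  then have "(p0 + p1) - (p0 + p1) \<circ>\<^sub>p [:-1, 1:] = q"
    unfolding p1(1) by simp
  moreover have "degree (p0 + p1) \<le> Suc (Suc d)"
    using p1(2) by (intro degree_add_le) (simp_all add: p0_def degree_monom_le)
  moreover have "coeff (p0 + p1) (Suc (Suc d)) = coeff q (Suc d) / real (Suc (Suc d))"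
    using p1(2) by (simp add: p0_def coeff_eq_0)
  ultimately show ?case
    by blast
qed

lemma backward_difference_surj_vanishing:
  assumes "degree q \<le> d"
  obtains p where "p - p \<circ>\<^sub>p [:-1, 1:] = q" "poly p (-1) = 0" "degree p \<le> Suc d"
    "coeff p (Suc d) = coeff q d / real (Suc d)"
proof -
  obtain p where p: "p - p \<circ>\<^sub>p [:-1, 1:] = q" "degree p \<le> Suc d"
    "coeff p (Suc d) = coeff q d / real (Suc d)"
    using backward_difference_surj[OF assms] by blast
  show ?thesis
  proof (rule that[of "p - [:poly p (-1):]"])
    show "(p - [:poly p (-1):]) - (p - [:poly p (-1):]) \<circ>\<^sub>p [:-1, 1:] = q"
      using p(1) by (simp add: pcompose_diff)
    show "degree (p - [:poly p (-1):]) \<le> Suc d"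
      using p(2) by (simp add: degree_diff_le)
  qed (use p(3) in simp_all)
qed

text \<open>p_0 = C and p_(j+1) is the antidifference of X p_j vanishing at -1, so that each step
  contributes one factor u.\<close>
lemma moment_polynomial_exists:
  obtains p where "degree p \<le> 2 * j" "coeff p (2 * j) = C / (2 ^ j * fact j)"
    "j \<ge> 1 \<Longrightarrow> coeff p 0 = 0"
    "\<And>u d x. urn_recurrence u d x \<Longrightarrow> moment_functional x (pCons 0 p) = d * C * u ^ Suc j"
proof (induction j arbitrary: thesis)
  case 0
  show ?case
    by (rule 0[of "[:C:]"]) (simp_all add: moment_functional_pCons_0_recurrence moment_functional_def[of _ 0])
next
  case (Suc j)
  obtain p where p: "degree p \<le> 2 * j" "coeff p (2 * j) = C / (2 ^ j * fact j)"
    "j \<ge> 1 \<Longrightarrow> coeff p 0 = 0"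
    "\<And>u d x. urn_recurrence u d x \<Longrightarrow> moment_functional x (pCons 0 p) = d * C * u ^ Suc j"
    using Suc.IH by metis
  have "degree (pCons 0 p) \<le> Suc (2 * j)"
    using p(1) degree_pCons_le[of 0 p] by linarith
  then obtain p' where p': "p' - p' \<circ>\<^sub>p [:-1, 1:] = pCons 0 p" "poly p' (-1) = 0"
    "degree p' \<le> Suc (Suc (2 * j))" "coeff p' (Suc (Suc (2 * j))) = coeff (pCons 0 p) (Suc (2 * j)) / real (Suc (Suc (2 * j)))"
    by (rule backward_difference_surj_vanishing)
  show ?case
  proof (rule Suc.prems)
    show "degree p' \<le> 2 * Suc j"
      using p'(3) by simp
    have "coeff p' (2 * Suc j) = C / (2 ^ j * fact j) / real (2 * Suc j)"
      using p'(4) p(2) by (simp add: mult.commute)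
    then show "coeff p' (2 * Suc j) = C / (2 ^ Suc j * fact (Suc j))"
      by (simp add: field_simps)
    have "poly p' 0 = poly (p' - p' \<circ>\<^sub>p [:-1, 1:]) 0 + poly p' (-1)"
      by (simp add: poly_pcompose)
    then show "coeff p' 0 = 0"
      using p'(1,2) by (simp add: poly_0_coeff_0)
    show "moment_functional x (pCons 0 p') = d * C * u ^ Suc (Suc j)" if "urn_recurrence u d x" for u d x
      using moment_functional_pCons_0_recurrence[OF that, of p'] p'(1,2) p(4)[OF that] by simp
  qed
qed

lemma moment_functional_pCons_0_eq_sum:
  assumes "degree p \<le> 2 * s" "coeff p 0 = 0"
  shows "moment_functional x (pCons 0 p) = (\<Sum>i=1..2*s. coeff p i * x (i + 1))"
proof -
  have "{..2 * s} = insert 0 {1..2 * s}"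
    by auto
  then show ?thesis
    using assms by (simp add: moment_functional_pCons_0)
qed

lemma moment_polynomial_coeffs_exist:
  assumes "s \<ge> 1"
  shows "\<exists>mc :: nat \<Rightarrow> real. mc (2 * s) = 1
    \<and> (\<forall>X. (\<Sum>i=1..2*s. mc i * f_poly (i + 1) X) = 0)
    \<and> (\<forall>X. (\<Sum>i=1..2*s. mc i * g_poly (i + 1) X) = fact s * 2 ^ s * X ^ (s + 1))"
proof -
  obtain p where p: "degree p \<le> 2 * s" "coeff p (2 * s) = fact s * 2 ^ s / (2 ^ s * fact s)"
    "coeff p 0 = 0"
    "\<And>u d x. urn_recurrence u d x \<Longrightarrow> moment_functional x (pCons 0 p) = d * (fact s * 2 ^ s) * u ^ Suc s"
    using moment_polynomial_exists[of s "fact s * 2 ^ s"] assms by metis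
  show ?thesis
  proof (intro exI[of _ "coeff p"] conjI allI)
    show "coeff p (2 * s) = 1"
      using p(2) by simp
    show "(\<Sum>i=1..2*s. coeff p i * f_poly (i + 1) X) = 0" for X
      using p(4)[OF urn_recurrence_f_poly] by (simp add: moment_functional_pCons_0_eq_sum[OF p(1,3)])
    show "(\<Sum>i=1..2*s. coeff p i * g_poly (i + 1) X) = fact s * 2 ^ s * X ^ (s + 1)" for X
      using p(4)[OF urn_recurrence_g_poly] by (simp add: moment_functional_pCons_0_eq_sum[OF p(1,3)])
  qed
qed

section \<open>The closed forms\<close>

lemma binomial_mult_binomial:
  assumes "l \<le> n"
  shows "real ((n + m) choose (n - l)) * real ((m + l) choose l) = fact (n + m) / (fact n * fact m) * real (n choose l)"
proof -
  have b1: "real ((n + m) choose (n - l)) = fact (n + m) / (fact (n - l) * fact (m + l))"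
    using assms by (subst binomial_fact) auto
  have b2: "real ((m + l) choose l) = fact (m + l) / (fact l * fact m)"
    by (subst binomial_fact) auto
  have b3: "real (n choose l) = fact n / (fact l * fact (n - l))"
    using assms by (subst binomial_fact) auto
  show ?thesis
    unfolding b1 b2 b3 by (simp add: field_simps)
qed

lemma corral_sum_eq_closed_form:
  "corral_sum (real c / real b) D n m = 1 / fact (n + m) * (real c ^ m / real b ^ m) *
    (\<Sum>l=0..n. (-1) ^ (n - l) *
       (real ((n + m) choose (n - l)) * real ((m + l) choose l)
          / ((real m + real c * real l / real b) gchoose m))
       * real l ^ (m + n - 1) * D l)"
  unfolding corral_sum_def sum_distrib_left
proof (rule sum.cong)
  fix l
  assume "l \<in> {0..n}"
  then have binomials: "real ((n + m) choose (n - l)) * real ((m + l) choose l) = fact (n + m) / (fact n * fact m) * real (n choose l)"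
    by (simp add: binomial_mult_binomial)
  have gchoose: "(real m + real c * real l / real b) gchoose m = pochhammer (real c / real b * real l + 1) m / fact m"
    by (simp add: gbinomial_pochhammer')
  have "pochhammer (real c / real b * real l + 1) m > 0"
    by (intro pochhammer_pos) (simp add: add_nonneg_pos)
  then show "corral_weight (real c / real b) n m l * D l = 1 / fact (n + m) * (real c ^ m / real b ^ m) *
      ((-1) ^ (n - l) * (real ((n + m) choose (n - l)) * real ((m + l) choose l)
        / ((real m + real c * real l / real b) gchoose m)) * real l ^ (m + n - 1) * D l)"
    unfolding corral_weight_def binomials gchoose by (simp add: field_simps power_divide)
qed simp

lemma corral_sum_sum:
  "corral_sum r (\<lambda>l. \<Sum>i\<in>A. a i * D i l) n m = (\<Sum>i\<in>A. a i * corral_sum r (D i) n m)"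
  unfolding corral_sum_def sum_distrib_left by (subst sum.swap) (simp add: mult_ac)

lemma urn_exp_power_closed_form:
  assumes "b \<ge> 1" "c \<ge> 1" "s \<ge> 1"
  shows "urn_exp b c (\<lambda>y. (real y / real c) ^ s) (c * n) (b * m)
    = 1 / fact (n + m) * (real c ^ m / real b ^ m) *
      (\<Sum>l=0..n. (-1) ^ (n - l) *
         (real ((n + m) choose (n - l)) * real ((m + l) choose l)
            / ((real m + real c * real l / real b) gchoose m))
         * real l ^ (m + n - 1)
         * (f_poly (s + 1) (real l) * ramQ l + g_poly (s + 1) (real l)))"
  using urn_exp_power[OF assms] by (simp add: f_poly_ramQ_add_g_poly corral_sum_eq_closed_form)

lemma urn_exp_moment_polynomial_closed_form:
  assumes "b \<ge> 1" "c \<ge> 1" "n \<ge> 1"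
    and f: "\<forall>X. (\<Sum>i=1..2*s. mc i * f_poly (i + 1) X) = 0"
    and g: "\<forall>X. (\<Sum>i=1..2*s. mc i * g_poly (i + 1) X) = fact s * 2 ^ s * X ^ (s + 1)"
  shows "urn_exp b c (\<lambda>y. \<Sum>i=1..2*s. mc i * (real y / real c) ^ i) (c * n) (b * m)
    = fact s * 2 ^ s / fact (n + m) * (real c ^ m / real b ^ m) *
      (\<Sum>l=0..n. (-1) ^ (n - l) *
         (real ((n + m) choose (n - l)) * real ((m + l) choose l)
            / ((real m + real c * real l / real b) gchoose m))
         * real l ^ (m + n + s))"
proof -
  have moments: "(\<Sum>i=1..2*s. mc i * ramanujan_moment l (Suc i)) = fact s * 2 ^ s * real l ^ (s + 1)" for l
  proof -
    have "(\<Sum>i=1..2*s. mc i * ramanujan_moment l (Suc i))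
        = ramQ l * (\<Sum>i=1..2*s. mc i * f_poly (i + 1) (real l)) + (\<Sum>i=1..2*s. mc i * g_poly (i + 1) (real l))"
      by (simp add: f_poly_ramQ_add_g_poly[symmetric] sum_distrib_left sum.distrib algebra_simps)
    then show ?thesis
      using f g by simp
  qed
  have "urn_exp b c (\<lambda>y. \<Sum>i=1..2*s. mc i * (real y / real c) ^ i) (c * n) (b * m)
      = (\<Sum>i=1..2*s. mc i * urn_exp b c (\<lambda>y. (real y / real c) ^ i) (c * n) (b * m))"
    by (rule urn_exp_sum[OF assms(1,2)])
  also have "\<dots> = (\<Sum>i=1..2*s. mc i * corral_sum (real c / real b) (\<lambda>l. ramanujan_moment l (Suc i)) n m)"
  proof (rule sum.cong)
    fix i
    assume "i \<in> {1..2*s}"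
    then show "mc i * urn_exp b c (\<lambda>y. (real y / real c) ^ i) (c * n) (b * m)
        = mc i * corral_sum (real c / real b) (\<lambda>l. ramanujan_moment l (Suc i)) n m"
      using urn_exp_power[OF assms(1,2), of i n m] by simp
  qed simp
  also have "\<dots> = corral_sum (real c / real b) (\<lambda>l. fact s * 2 ^ s * real l ^ (s + 1)) n m"
    by (simp only: corral_sum_sum[symmetric] moments)
  also have "\<dots> = fact s * 2 ^ s / fact (n + m) * (real c ^ m / real b ^ m) *
      (\<Sum>l=0..n. (-1) ^ (n - l) *
         (real ((n + m) choose (n - l)) * real ((m + l) choose l)
            / ((real m + real c * real l / real b) gchoose m))
         * real l ^ (m + n + s))"
  proof -
    have "m + n - 1 + (s + 1) = m + n + s"
      using assms(3) by simp
    then have "real l ^ (m + n + s) = real l ^ (m + n - 1) * real l ^ (s + 1)" for l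
      by (metis power_add)
    then show ?thesis
      unfolding corral_sum_eq_closed_form sum_distrib_left by (intro sum.cong) (simp_all add: mult_ac)
  qed
  finally show ?thesis .
qed

lemma closed_form_binomial_simplification:
  "K / fact (n + m) * F *
     (\<Sum>l=0..n. (-1) ^ (n - l) *
        (real ((n + m) choose (n - l)) * real ((m + l) choose l) / G l) * E l)
   = K / (fact n * fact m) * F *
     (\<Sum>l=0..n. (-1) ^ (n - l) * (real (n choose l) / G l) * E l)"
  unfolding sum_distrib_left
proof (rule sum.cong)
  fix l
  assume "l \<in> {0..n}"
  then have "l \<le> n"
    by simp
  show "K / fact (n + m) * F * ((-1) ^ (n - l) * (real ((n + m) choose (n - l)) * real ((m + l) choose l) / G l) * E l)
      = K / (fact n * fact m) * F * ((-1) ^ (n - l) * (real (n choose l) / G l) * E l)"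
    unfolding binomial_mult_binomial[OF \<open>l \<le> n\<close>] by (cases "G l = 0") (simp_all add: field_simps)
qed simp

theorem corollary3:
  fixes b c n m :: nat
  assumes "b \<ge> 1" "c \<ge> 1" "n \<ge> 1" "m \<ge> 1"
  shows
   "(\<forall>s::nat. s \<ge> 1 \<longrightarrow>
       urn_exp b c (\<lambda>y. (real y / real c) ^ s) (c * n) (b * m)
       = 1 / fact (n + m) * (real c ^ m / real b ^ m) *
         (\<Sum>l=0..n. (-1) ^ (n - l) *
            (real ((n + m) choose (n - l)) * real ((m + l) choose l)
               / ((real m + real c * real l / real b) gchoose m))
            * real l ^ (m + n - 1)
            * (f_poly (s + 1) (real l) * ramQ l + g_poly (s + 1) (real l))))
    \<and> (\<forall>s::nat. s \<ge> 1 \<longrightarrow>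
         (\<exists>mc :: nat \<Rightarrow> real. mc (2 * s) = 1
            \<and> (\<forall>X::real. (\<Sum>i=1..2*s. mc i * f_poly (i + 1) X) = 0)
            \<and> (\<forall>X::real. (\<Sum>i=1..2*s. mc i * g_poly (i + 1) X)
                         = fact s * 2 ^ s * X ^ (s + 1)))
       \<and> (\<forall>mc :: nat \<Rightarrow> real.
            (mc (2 * s) = 1
             \<and> (\<forall>X::real. (\<Sum>i=1..2*s. mc i * f_poly (i + 1) X) = 0)
             \<and> (\<forall>X::real. (\<Sum>i=1..2*s. mc i * g_poly (i + 1) X)
                          = fact s * 2 ^ s * X ^ (s + 1)))
            \<longrightarrow>
              urn_exp b c (\<lambda>y. \<Sum>i=1..2*s. mc i * (real y / real c) ^ i) (c * n) (b * m)
              = fact s * 2 ^ s / fact (n + m) * (real c ^ m / real b ^ m) *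
                (\<Sum>l=0..n. (-1) ^ (n - l) *
                   (real ((n + m) choose (n - l)) * real ((m + l) choose l)
                      / ((real m + real c * real l / real b) gchoose m))
                   * real l ^ (m + n + s))
            \<and> fact s * 2 ^ s / fact (n + m) * (real c ^ m / real b ^ m) *
                (\<Sum>l=0..n. (-1) ^ (n - l) *
                   (real ((n + m) choose (n - l)) * real ((m + l) choose l)
                      / ((real m + real c * real l / real b) gchoose m))
                   * real l ^ (m + n + s))
              = fact s * 2 ^ s / (fact n * fact m) * (real c ^ m / real b ^ m) *
                (\<Sum>l=0..n. (-1) ^ (n - l) *
                   (real (n choose l) / ((real m + real c * real l / real b) gchoose m))
                   * real l ^ (m + n + s))))"
  apply (intro conjI allI impI; (elim conjE)?)
     apply (erule urn_exp_power_closed_form[OF assms(1,2)])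
    apply (erule moment_polynomial_coeffs_exist)
   apply (erule (1) urn_exp_moment_polynomial_closed_form[OF assms(1-3)])
  apply (rule closed_form_binomial_simplification)
  done

end
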